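(* Let $A$ be a ghor algebra with cycle algebra $S$, and let $\mathfrak{q} \in \operatorname{Spec}S$. Then every subpath of a locally invertible cycle in the cyclic localization $A_{\mathfrak{q}}$ is locally invertible.
   Context: $k$ is an algebraically closed field; $Q$ is a dimer quiver on a compact orientable surface $\Sigma$ (smooth or with two points identified), i.e. a quiver embedded in $\Sigma$ such that each component of $\Sigma\setminus Q$ is simply connected and bounded by an oriented cycle (unit cycle). A perfect matching is a set of arrows $x$ meeting each unit cycle in exactly one arrow; $\mathcal{P}$ is the set of them. With $n=|Q_0|$, $\eta: kQ \to M_n(k[\mathcal{P}])$ is the algebra map $\eta(e_i)=e_{ii}$, $\eta(a) = e_{\operatorname{h}(a),\operatorname{t}(a)}\prod_{x\ni a} x$, and $A = kQ/\ker\eta$ is the ghor algebra. Via $\eta$, $A$ is a matrix ring $[A_{ij}] \subseteq M_n(B)$ with $B = k[\mathcal{P}]$, where $A_{ij}\subseteq B$ is the set of single nonzero entries of images of elements of $e_iAe_j$, and $A_i := A_{ii}$. The cycle algebra is $S = k[\cup_i A_i]$. For $\mathfrak{q} \in \operatorname{Spec}S$, the cyclic localization is $A_{\mathfrak{q}} = \langle [A_{ij}(A_j)_{\mathfrak{q}\cap A_j}]_{i,j}\rangle \subseteq M_n(\operatorname{Frac}B)$, where $(A_j)_{\mathfrak{q}\cap A_j}$ is the localization of $A_j$ at the prime $\mathfrak{q}\cap A_j$. A path $p$ (with tail $\operatorname{t}(p)$, head $\operatorname{h}(p)$) is locally invertible in $A_{\mathfrak{q}}$ if there is $q \in e_{\operatorname{t}(p)}A_{\mathfrak{q}}e_{\operatorname{h}(p)}$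 with $qp = e_{\operatorname{t}(p)}$ and $pq = e_{\operatorname{h}(p)}$. *)

theory Defs
  imports "HOL-Library.Poly_Mapping" "HOL-Library.Countable"
    "HOL-Computational_Algebra.Fraction_Field" "HOL-Computational_Algebra.Polynomial"
begin

text \<open>The empty list is not used as a path; trivial paths are the
  idempotents e_i.\<close>

definition is_path :: "('a \<Rightarrow> 'v) \<Rightarrow> ('a \<Rightarrow> 'v) \<Rightarrow> 'a list \<Rightarrow> bool" where
  "is_path hq tq p \<longleftrightarrow> p \<noteq> [] \<and> (\<forall>k. Suc k < length p \<longrightarrow> hq (p ! k) = tq (p ! Suc k))"

definition ptail :: "('a \<Rightarrow> 'v) \<Rightarrow> 'a list \<Rightarrow> 'v" where
  "ptail tq p = tq (hd p)"

definition phead :: "('a \<Rightarrow> 'v) \<Rightarrow> 'a list \<Rightarrow> 'v" where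
  "phead hq p = hq (last p)"

definition paths_from_to :: "('a \<Rightarrow> 'v) \<Rightarrow> ('a \<Rightarrow> 'v) \<Rightarrow> 'v \<Rightarrow> 'v \<Rightarrow> 'a list set" where
  "paths_from_to hq tq j i =
     {p. (p = [] \<and> i = j) \<or> (is_path hq tq p \<and> ptail tq p = j \<and> phead hq p = i)}"

definition is_cycle :: "('a \<Rightarrow> 'v) \<Rightarrow> ('a \<Rightarrow> 'v) \<Rightarrow> 'a list \<Rightarrow> bool" where
  "is_cycle hq tq p \<longleftrightarrow> is_path hq tq p \<and> phead hq p = ptail tq p"

definition is_subpath :: "'a list \<Rightarrow> 'a list \<Rightarrow> bool" where
  "is_subpath s p \<longleftrightarrow> s \<noteq> [] \<and> (\<exists>xs zs. p = xs @ s @ zs)"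

definition is_unit_cycle :: "('a \<Rightarrow> 'v) \<Rightarrow> ('a \<Rightarrow> 'v) \<Rightarrow> 'a list \<Rightarrow> bool" where
  "is_unit_cycle hq tq c \<longleftrightarrow> c \<noteq> [] \<and> distinct c \<and>
     (\<forall>k < length c. hq (c ! k) = tq (c ! (Suc k mod length c)))"

definition cyc_pos :: "'a list \<Rightarrow> 'a \<Rightarrow> nat" where
  "cyc_pos c a = (THE k. k < length c \<and> c ! k = a)"

definition cyc_succ :: "'a list \<Rightarrow> 'a \<Rightarrow> 'a" where
  "cyc_succ c a = c ! (Suc (cyc_pos c a) mod length c)"

definition cyc_pred :: "'a list \<Rightarrow> 'a \<Rightarrow> 'a" where
  "cyc_pred c a = c ! ((cyc_pos c a + length c - 1) mod length c)"

definition face_of :: "'a list set \<Rightarrow> 'a \<Rightarrow> 'a list" where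
  "face_of U a = (THE c. c \<in> U \<and> a \<in> set c)"

text \<open>Rotation of the incoming arrows at a vertex: go from the incoming arrow a to the next
  arrow b of its positive face (b leaves the vertex), and then to the arrow preceding b in its
  negative face (which again enters the vertex).  The orbits of this rotation on the incoming
  arrows at v are the points of the (smooth) surface lying over v.\<close>
definition link_rot :: "'a list set \<Rightarrow> 'a list set \<Rightarrow> 'a \<Rightarrow> 'a" where
  "link_rot Up Um a = (let b = cyc_succ (face_of Up a) a in cyc_pred (face_of Um b) b)"

definition link_orbits :: "('a \<Rightarrow> 'v) \<Rightarrow> 'a list set \<Rightarrow> 'a list set \<Rightarrow> 'v \<Rightarrow> nat" where
  "link_orbits hq Up Um v =
     card ((\<lambda>a. {(link_rot Up Um ^^ k) a | k. True}) ` {a. hq a = v})"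

text \<open>A dimer quiver: finite quiver together with its positive (say counterclockwise) and
  negative (clockwise) unit cycles = boundaries of the faces of Sigma minus Q.  Gluing discs along the unit
  cycles gives a compact orientable surface; it is smooth iff every vertex link is a single
  circle, and has (exactly) two points identified iff exactly one vertex has a link with two
  circles and all others have a single circle.\<close>
definition dimer_quiver ::
  "('a::finite \<Rightarrow> 'v::finite) \<Rightarrow> ('a \<Rightarrow> 'v) \<Rightarrow> 'a list set \<Rightarrow> 'a list set \<Rightarrow> bool" where
  "dimer_quiver hq tq Up Um \<longleftrightarrow>
     (\<forall>c \<in> Up \<union> Um. is_unit_cycle hq tq c) \<and> Up \<inter> Um = {} \<and>
     (\<forall>a. \<exists>!c. c \<in> Up \<and> a \<in> set c) \<and> (\<forall>a. \<exists>!c. c \<in> Um \<and> a \<in> set c) \<and>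
     (\<forall>v. \<exists>a. hq a = v) \<and>
     (\<forall>v. link_orbits hq Up Um v \<in> {1, 2}) \<and>
     card {v. link_orbits hq Up Um v \<noteq> 1} \<le> 1"

definition perfect_matchings :: "'a list set \<Rightarrow> 'a list set \<Rightarrow> 'a set set" where
  "perfect_matchings Up Um = {D. \<forall>c \<in> Up \<union> Um. card (D \<inter> set c) = 1}"

text \<open>We realise B = k[P] inside the polynomial ring in countably many variables x_0, x_1, ...
  over k (monomials are finitely supported exponent vectors), the variable of
  a perfect matching D being x_(to_nat D) (an injective numbering).  Frac B is realised inside
  the fraction field of this big polynomial ring.\<close>

type_synonym 'k mpoly_ring = "(nat \<Rightarrow>\<^sub>0 nat) \<Rightarrow>\<^sub>0 'k"
type_synonym 'k ratfun = "'k mpoly_ring fract"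

definition pm_var :: "'a::finite set \<Rightarrow> 'k::field ratfun" where
  "pm_var D = Fract (Poly_Mapping.single (Poly_Mapping.single (to_nat (\<lambda>x. x \<in> D)) 1) 1) 1"

definition scal :: "'k::field \<Rightarrow> 'k ratfun" where
  "scal c = Fract (Poly_Mapping.single 0 c) 1"

text \<open>eta(a) has the single nonzero entry prod_{x in P, a in x} x at (h(a), t(a)).\<close>
definition arrow_wt :: "'a list set \<Rightarrow> 'a list set \<Rightarrow> 'a::finite \<Rightarrow> 'k::field ratfun" where
  "arrow_wt Up Um a = (\<Prod>D \<in> {D \<in> perfect_matchings Up Um. a \<in> D}. pm_var D)"

definition path_wt :: "'a list set \<Rightarrow> 'a list set \<Rightarrow> 'a::finite list \<Rightarrow> 'k::field ratfun" where
  "path_wt Up Um p = (\<Prod>a \<leftarrow> p. arrow_wt Up Um a)"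

text \<open>A_ij = single nonzero (i,j)-entries of eta(e_i kQ e_j), i.e. the k-span of the
  weights of the paths from j to i.\<close>
definition ghor_entry ::
  "('a::finite \<Rightarrow> 'v) \<Rightarrow> ('a \<Rightarrow> 'v) \<Rightarrow> 'a list set \<Rightarrow> 'a list set \<Rightarrow> 'v \<Rightarrow> 'v \<Rightarrow> 'k::field ratfun set" where
  "ghor_entry hq tq Up Um i j =
     {(\<Sum>p \<in> P. scal (c p) * path_wt Up Um p) | P c. finite P \<and> P \<subseteq> paths_from_to hq tq j i}"

inductive_set cycle_alg ::
  "('a::finite \<Rightarrow> 'v) \<Rightarrow> ('a \<Rightarrow> 'v) \<Rightarrow> 'a list set \<Rightarrow> 'a list set \<Rightarrow> 'k::field ratfun set"
  for hq tq Up Um where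
    gen: "x \<in> ghor_entry hq tq Up Um i i \<Longrightarrow> x \<in> cycle_alg hq tq Up Um"
  | add: "x \<in> cycle_alg hq tq Up Um \<Longrightarrow> y \<in> cycle_alg hq tq Up Um \<Longrightarrow> x + y \<in> cycle_alg hq tq Up Um"
  | mult: "x \<in> cycle_alg hq tq Up Um \<Longrightarrow> y \<in> cycle_alg hq tq Up Um \<Longrightarrow> x * y \<in> cycle_alg hq tq Up Um"

definition prime_ideal_of :: "'r::comm_ring_1 set \<Rightarrow> 'r set \<Rightarrow> bool" where
  "prime_ideal_of S q \<longleftrightarrow> q \<subseteq> S \<and> 0 \<in> q \<and> 1 \<notin> q \<and>
     (\<forall>x\<in>q. \<forall>y\<in>q. x + y \<in> q) \<and> (\<forall>s\<in>S. \<forall>x\<in>q. s * x \<in> q) \<and>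
     (\<forall>x\<in>S. \<forall>y\<in>S. x * y \<in> q \<longrightarrow> x \<in> q \<or> y \<in> q)"

definition loc_cycles ::
  "('a::finite \<Rightarrow> 'v) \<Rightarrow> ('a \<Rightarrow> 'v) \<Rightarrow> 'a list set \<Rightarrow> 'a list set \<Rightarrow> 'k::field ratfun set \<Rightarrow> 'v \<Rightarrow> 'k ratfun set" where
  "loc_cycles hq tq Up Um q j =
     {a / s | a s. a \<in> ghor_entry hq tq Up Um j j \<and> s \<in> ghor_entry hq tq Up Um j j \<and> s \<notin> q}"

type_synonym ('v, 'k) rmat = "'v \<Rightarrow> 'v \<Rightarrow> 'k ratfun"

definition mmult :: "('v::finite, 'k::field) rmat \<Rightarrow> ('v, 'k) rmat \<Rightarrow> ('v, 'k) rmat" where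
  "mmult M N = (\<lambda>i j. \<Sum>l\<in>UNIV. M i l * N l j)"

definition madd :: "('v::finite, 'k::field) rmat \<Rightarrow> ('v, 'k) rmat \<Rightarrow> ('v, 'k) rmat" where
  "madd M N = (\<lambda>i j. M i j + N i j)"

definition idem :: "'v \<Rightarrow> ('v, 'k::field) rmat" where
  "idem v = (\<lambda>i j. if i = v \<and> j = v then 1 else 0)"

definition path_mat ::
  "('a::finite \<Rightarrow> 'v) \<Rightarrow> ('a \<Rightarrow> 'v) \<Rightarrow> 'a list set \<Rightarrow> 'a list set \<Rightarrow> 'a list \<Rightarrow> ('v, 'k::field) rmat" where
  "path_mat hq tq Up Um p =
     (\<lambda>i j. if i = phead hq p \<and> j = ptail tq p then path_wt Up Um p else 0)"

inductive_set cyc_loc ::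
  "('a::finite \<Rightarrow> 'v::finite) \<Rightarrow> ('a \<Rightarrow> 'v) \<Rightarrow> 'a list set \<Rightarrow> 'a list set \<Rightarrow> 'k::field ratfun set
     \<Rightarrow> ('v, 'k) rmat set"
  for hq tq Up Um q where
    gen: "(\<forall>i j. M i j \<in> {a * b | a b. a \<in> ghor_entry hq tq Up Um i j \<and> b \<in> loc_cycles hq tq Up Um q j})
          \<Longrightarrow> M \<in> cyc_loc hq tq Up Um q"
  | add: "M \<in> cyc_loc hq tq Up Um q \<Longrightarrow> N \<in> cyc_loc hq tq Up Um q \<Longrightarrow> madd M N \<in> cyc_loc hq tq Up Um q"
  | mult: "M \<in> cyc_loc hq tq Up Um q \<Longrightarrow> N \<in> cyc_loc hq tq Up Um q \<Longrightarrow> mmult M N \<in> cyc_loc hq tq Up Um q"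

definition loc_invertible ::
  "('a::finite \<Rightarrow> 'v::finite) \<Rightarrow> ('a \<Rightarrow> 'v) \<Rightarrow> 'a list set \<Rightarrow> 'a list set \<Rightarrow> 'k::field ratfun set
     \<Rightarrow> 'a list \<Rightarrow> bool" where
  "loc_invertible hq tq Up Um q p \<longleftrightarrow>
     (\<exists>Q. (\<exists>X \<in> cyc_loc hq tq Up Um q. Q = mmult (mmult (idem (ptail tq p)) X) (idem (phead hq p))) \<and>
          mmult Q (path_mat hq tq Up Um p) = idem (ptail tq p) \<and>
          mmult (path_mat hq tq Up Um p) Q = idem (phead hq p))"

end

theory Submission
  imports Defs
begin

text \<open>
  All matrices involved have a single nonzero entry, so a path p from t to h is locally
  invertible exactly when some X in A_q satisfies X_th \<cdot> \<eta>(p) = 1 in Frac B.  If p = xs s zs,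
  then \<eta>(xs) X \<eta>(zs) lies in A_q, and its entry at the corner of s, namely \<eta>(xs) X_th \<eta>(zs),
  inverts \<eta>(s) because Frac B is commutative.
\<close>

definition single_entry :: "'v \<Rightarrow> 'v \<Rightarrow> 'k::field ratfun \<Rightarrow> ('v, 'k) rmat" where
  "single_entry i j a = (\<lambda>r c. if r = i \<and> c = j then a else 0)"

lemma mmult_single_entry_left:
  "mmult (single_entry i j a) (M :: ('v::finite, 'k::field) rmat) =
     (\<lambda>r c. if r = i then a * M j c else 0)"
proof (intro ext)
  fix r c
  have "(\<Sum>l\<in>UNIV. single_entry i j a r l * M l c) =
      (\<Sum>l\<in>UNIV. if l = j then (if r = i then a * M j c else 0) else 0)"
    by (rule sum.cong) (auto simp: single_entry_def)
  then show "mmult (single_entry i j a) M r c = (if r = i then a * M j c else 0)"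
    by (simp add: mmult_def)
qed

lemma mmult_single_entry_right:
  "mmult (M :: ('v::finite, 'k::field) rmat) (single_entry j k b) =
     (\<lambda>r c. if c = k then M r j * b else 0)"
proof (intro ext)
  fix r c
  have "(\<Sum>l\<in>UNIV. M r l * single_entry j k b l c) =
      (\<Sum>l\<in>UNIV. if l = j then (if c = k then M r j * b else 0) else 0)"
    by (rule sum.cong) (auto simp: single_entry_def)
  then show "mmult M (single_entry j k b) r c = (if c = k then M r j * b else 0)"
    by (simp add: mmult_def)
qed

lemma idem_eq_single_entry: "idem v = single_entry v v 1"
  by (simp add: idem_def single_entry_def)

lemma path_mat_eq_single_entry:
  "path_mat hq tq Up Um p = single_entry (phead hq p) (ptail tq p) (path_wt Up Um p)"
  by (simp add: path_mat_def single_entry_def)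

lemma idem_mmult_idem:
  "mmult (mmult (idem i) (X :: ('v::finite, 'k::field) rmat)) (idem j) = single_entry i j (X i j)"
  unfolding idem_eq_single_entry mmult_single_entry_left mmult_single_entry_right
  by (intro ext) (simp add: single_entry_def)

lemma path_wt_append: "path_wt Up Um (xs @ ys) = path_wt Up Um xs * path_wt Up Um ys"
  by (simp add: path_wt_def)

lemma is_path_appendD:
  assumes path: "is_path hq tq (a @ b)" and "a \<noteq> []" and "b \<noteq> []"
  shows "is_path hq tq a \<and> is_path hq tq b \<and> phead hq a = ptail tq b"
proof (intro conjI)
  have step: "hq ((a @ b) ! k) = tq ((a @ b) ! Suc k)" if "Suc k < length a + length b" for k
    using path that by (simp add: is_path_def)
  show "is_path hq tq a"
    unfolding is_path_def
  proof (intro conjI allI impI)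
    fix k assume "Suc k < length a"
    with step[of k] show "hq (a ! k) = tq (a ! Suc k)" by (simp add: nth_append)
  qed (fact \<open>a \<noteq> []\<close>)
  show "is_path hq tq b"
    unfolding is_path_def
  proof (intro conjI allI impI)
    fix k assume "Suc k < length b"
    with step[of "length a + k"] show "hq (b ! k) = tq (b ! Suc k)" by (simp add: nth_append)
  qed (fact \<open>b \<noteq> []\<close>)
  have "Suc (length a - 1) < length a + length b"
    using \<open>a \<noteq> []\<close> \<open>b \<noteq> []\<close> by (simp add: Suc_leI)
  from step[OF this] show "phead hq a = ptail tq b"
    using \<open>a \<noteq> []\<close> \<open>b \<noteq> []\<close>
    by (simp add: phead_def ptail_def nth_append last_conv_nth hd_conv_nth)
qed

lemma prefix_in_paths_from_to:
  assumes "is_path hq tq (a @ b)" and "b \<noteq> []"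
  shows "a \<in> paths_from_to hq tq (ptail tq (a @ b)) (ptail tq b)"
  using assms is_path_appendD[OF assms(1) _ assms(2)]
  by (cases "a = []") (auto simp: paths_from_to_def ptail_def)

lemma suffix_in_paths_from_to:
  assumes "is_path hq tq (a @ b)" and "a \<noteq> []"
  shows "b \<in> paths_from_to hq tq (phead hq a) (phead hq (a @ b))"
  using assms is_path_appendD[OF assms(1) assms(2)]
  by (cases "b = []") (auto simp: paths_from_to_def phead_def)

lemma path_wt_in_ghor_entry:
  assumes "p \<in> paths_from_to hq tq j i"
  shows "(path_wt Up Um p :: 'k::field ratfun) \<in> ghor_entry hq tq Up Um i j"
proof -
  have "scal (1::'k) = 1"
    by (simp add: scal_def One_fract_def)
  then show ?thesis
    unfolding ghor_entry_def using assms
    by (intro CollectI exI[of _ "{p}"] exI[of _ "\<lambda>_. 1"]) auto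
qed

lemma one_in_loc_cycles:
  assumes "1 \<notin> q"
  shows "(1 :: 'k::field ratfun) \<in> loc_cycles hq tq Up Um q j"
proof -
  have "[] \<in> paths_from_to hq tq j j"
    by (simp add: paths_from_to_def)
  from path_wt_in_ghor_entry[OF this]
  have "(1 :: 'k ratfun) \<in> ghor_entry hq tq Up Um j j"
    by (simp add: path_wt_def)
  with assms have "(1 :: 'k ratfun) / 1 \<in> loc_cycles hq tq Up Um q j"
    unfolding loc_cycles_def by blast
  then show ?thesis
    by simp
qed

lemma single_entry_in_cyc_loc:
  assumes "1 \<notin> q" and "w \<in> ghor_entry hq tq Up Um i j"
  shows "(single_entry i j w :: ('v::finite, 'k::field) rmat) \<in> cyc_loc hq tq Up Um q"
proof -
  have "\<exists>a b. single_entry i j w r c = a * b \<and>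
      a \<in> ghor_entry hq tq Up Um r c \<and> b \<in> loc_cycles hq tq Up Um q c" for r c
  proof -
    have "(0 :: 'k ratfun) \<in> ghor_entry hq tq Up Um r c"
      unfolding ghor_entry_def by (intro CollectI exI[of _ "{}"]) auto
    then have "single_entry i j w r c \<in> ghor_entry hq tq Up Um r c"
      using assms(2) by (simp add: single_entry_def)
    moreover have "single_entry i j w r c = single_entry i j w r c * 1"
      by simp
    ultimately show ?thesis
      using one_in_loc_cycles[OF assms(1), of hq tq Up Um c] by blast
  qed
  then show ?thesis
    by (intro cyc_loc.gen allI)
qed

lemma loc_invertible_iff:
  "loc_invertible hq tq Up Um q p \<longleftrightarrow>
     (\<exists>X \<in> cyc_loc hq tq Up Um q. X (ptail tq p) (phead hq p) * path_wt Up Um p = 1)"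
  (is "_ \<longleftrightarrow> (\<exists>X \<in> _. ?inverts X)")
proof
  assume "loc_invertible hq tq Up Um q p"
  then obtain X where "X \<in> cyc_loc hq tq Up Um q"
    and left_inv: "mmult (mmult (mmult (idem (ptail tq p)) X) (idem (phead hq p)))
      (path_mat hq tq Up Um p) = idem (ptail tq p)"
    unfolding loc_invertible_def by blast
  from fun_cong[OF fun_cong[OF left_inv, of "ptail tq p"], of "ptail tq p"] have "?inverts X"
    unfolding idem_mmult_idem path_mat_eq_single_entry mmult_single_entry_left
    by (simp add: single_entry_def idem_def)
  with \<open>X \<in> _\<close> show "\<exists>X \<in> cyc_loc hq tq Up Um q. ?inverts X" by blast
next
  assume "\<exists>X \<in> cyc_loc hq tq Up Um q. ?inverts X"
  then obtain X where "X \<in> cyc_loc hq tq Up Um q" and inv: "?inverts X" ..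
  let ?Q = "single_entry (ptail tq p) (phead hq p) (X (ptail tq p) (phead hq p))"
  have "?Q = mmult (mmult (idem (ptail tq p)) X) (idem (phead hq p))"
    by (simp add: idem_mmult_idem)
  moreover have "mmult ?Q (path_mat hq tq Up Um p) = idem (ptail tq p)"
    unfolding path_mat_eq_single_entry mmult_single_entry_left
    by (intro ext) (simp add: single_entry_def idem_def inv)
  moreover have "mmult (path_mat hq tq Up Um p) ?Q = idem (phead hq p)"
    unfolding path_mat_eq_single_entry mmult_single_entry_right
    using inv by (intro ext) (simp add: single_entry_def idem_def mult.commute)
  ultimately show "loc_invertible hq tq Up Um q p"
    unfolding loc_invertible_def using \<open>X \<in> _\<close> by blast
qed

lemma loc_invertible_subpath:
  assumes "1 \<notin> q" and "is_path hq tq p" and "loc_invertible hq tq Up Um q p"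
    and "is_subpath s p"
  shows "loc_invertible hq tq Up Um q s"
proof -
  obtain xs zs where p: "p = xs @ s @ zs" and "s \<noteq> []"
    using \<open>is_subpath s p\<close> by (auto simp: is_subpath_def)
  obtain X where "X \<in> cyc_loc hq tq Up Um q"
    and inv: "X (ptail tq p) (phead hq p) * path_wt Up Um p = 1"
    using \<open>loc_invertible hq tq Up Um q p\<close> unfolding loc_invertible_iff by blast
  have "xs \<in> paths_from_to hq tq (ptail tq p) (ptail tq s)"
    using prefix_in_paths_from_to[of hq tq xs "s @ zs"] \<open>is_path hq tq p\<close> \<open>s \<noteq> []\<close>
    by (simp add: p ptail_def)
  moreover have "zs \<in> paths_from_to hq tq (phead hq s) (phead hq p)"
    using suffix_in_paths_from_to[of hq tq "xs @ s" zs] \<open>is_path hq tq p\<close> \<open>s \<noteq> []\<close>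
    by (simp add: p phead_def)
  ultimately have
    "single_entry (ptail tq s) (ptail tq p) (path_wt Up Um xs) \<in> cyc_loc hq tq Up Um q"
    "single_entry (phead hq p) (phead hq s) (path_wt Up Um zs) \<in> cyc_loc hq tq Up Um q"
    using single_entry_in_cyc_loc[OF \<open>1 \<notin> q\<close> path_wt_in_ghor_entry] by blast+
  then have Y: "mmult (mmult (single_entry (ptail tq s) (ptail tq p) (path_wt Up Um xs)) X)
      (single_entry (phead hq p) (phead hq s) (path_wt Up Um zs)) \<in> cyc_loc hq tq Up Um q"
    (is "?Y \<in> _")
    using \<open>X \<in> _\<close> by (blast intro: cyc_loc.mult)
  have "?Y (ptail tq s) (phead hq s) * path_wt Up Um s
      = path_wt Up Um xs * X (ptail tq p) (phead hq p) * path_wt Up Um zs * path_wt Up Um s"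
    by (simp add: mmult_single_entry_left mmult_single_entry_right)
  also have "\<dots> = X (ptail tq p) (phead hq p) *
      (path_wt Up Um xs * path_wt Up Um s * path_wt Up Um zs)"
    by (simp only: mult_ac)
  also have "\<dots> = X (ptail tq p) (phead hq p) * path_wt Up Um p"
    by (simp add: p path_wt_append mult.assoc)
  finally have "?Y (ptail tq s) (phead hq s) * path_wt Up Um s = 1"
    using inv by (simp only:)
  from this Y show ?thesis
    unfolding loc_invertible_iff by (rule bexI[where x = ?Y])
qed

theorem lemma4p4:
  fixes hq tq :: "'a::finite \<Rightarrow> 'v::finite"
    and Up Um :: "'a list set"
    and q :: "'k::alg_closed_field ratfun set"
  assumes "dimer_quiver hq tq Up Um"
    and "prime_ideal_of (cycle_alg hq tq Up Um) q"
  shows "\<forall>p s. is_cycle hq tq p \<and> loc_invertible hq tq Up Um q p \<and> is_subpath s p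
           \<longrightarrow> loc_invertible hq tq Up Um q s"
proof (intro allI impI)
  fix p s
  assume "is_cycle hq tq p \<and> loc_invertible hq tq Up Um q p \<and> is_subpath s p"
  then have "is_path hq tq p" "loc_invertible hq tq Up Um q p" "is_subpath s p"
    by (simp_all add: is_cycle_def)
  moreover have "1 \<notin> q"
    using assms(2) by (simp add: prime_ideal_of_def)
  ultimately show "loc_invertible hq tq Up Um q s"
    using loc_invertible_subpath by blast
qed

end
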